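(* For integers $a,b\ge0$ let $c_{a,b}=c_{a,b}^{a+b+1}$. Then (1) $c_{a,b}\in\mathbb Z[\tfrac12]$; (2) $c_{a,b}-c_{b,a}\in2\mathbb Z$; (3) $\nu_2(c_{a+b,0})=\nu_2(c_{0,a+b})\le\nu_2(c_{a,b})\le0$.
   Context: For integers $a,b,r\ge0$, $c_{a,b}^r=2(-1)^r\Big(\binom{2r}{2b+2}-(1-2^{-2r})\binom{2r}{2a+1}\Big)$ (binomial coefficients $\binom nk=0$ if $k>n$). $\nu_2$ is the $2$-adic valuation on $\mathbb Q$, with $\nu_2(0)=\infty$. *)

theory Defs
  imports Complex_Main "HOL-Library.Extended_Real" "HOL-Computational_Algebra.Primes"
begin

text \<open>c^r_{a,b} = 2(-1)^r (binom(2r,2b+2) - (1 - 2^(-2r)) binom(2r,2a+1)), as a rational;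
  n choose k = 0 for k > n, as in the paper.\<close>
definition cr :: "nat \<Rightarrow> nat \<Rightarrow> nat \<Rightarrow> rat" where
  "cr r a b = 2 * (-1) ^ r * (of_nat ((2*r) choose (2*b+2))
      - (1 - 1 / 2 ^ (2*r)) * of_nat ((2*r) choose (2*a+1)))"

definition cab :: "nat \<Rightarrow> nat \<Rightarrow> rat" where
  "cab a b = cr (a + b + 1) a b"

definition nu2 :: "rat \<Rightarrow> ereal" where
  "nu2 q = (if q = 0 then \<infinity> else
     ereal (real_of_int (int (multiplicity (2::int) (fst (quotient_of q)))
                         - int (multiplicity (2::int) (snd (quotient_of q))))))"

definition Zhalf :: "rat set" where
  "Zhalf = {q. \<exists>m::int. \<exists>k::nat. q = of_int m / 2 ^ k}"

end

theory Submission
  imports Defs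
begin

text \<open>With \<open>n = 2r\<close>, \<open>c\<^sup>r\<^sub>a\<^sub>,\<^sub>b\<close> is twice an integer plus
  \<open>\<plusminus>2 binom(n, 2a+1) / 2\<^sup>n\<close>. Since \<open>0 < binom(n, 2a+1) < 2\<^sup>n\<close>, the fractional term has
  2-adic valuation strictly below that of the integer term, so
  \<open>\<nu>\<^sub>2(c\<^sup>r\<^sub>a\<^sub>,\<^sub>b) = \<nu>\<^sub>2(binom(n, 2a+1)) + 1 - n \<le> 0\<close>. For
  \<open>r = a + b + 1\<close> the extreme cases give \<open>binom(n, 1) = binom(n, n-1) = n\<close>, and
  \<open>(2a+1) binom(n, 2a+1) = n binom(n-1, 2a)\<close> shows \<open>\<nu>\<^sub>2(n) \<le> \<nu>\<^sub>2(binom(n, 2a+1))\<close>.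
  Swapping \<open>a\<close> and \<open>b\<close> leaves \<open>binom(n, 2a+1) = binom(n, 2b+1)\<close> unchanged, so the
  fractional parts cancel in \<open>c\<^sub>a\<^sub>,\<^sub>b - c\<^sub>b\<^sub>,\<^sub>a\<close>.\<close>

lemma nu2_of_int_div:
  fixes p d :: int
  assumes "p \<noteq> 0" "d \<noteq> 0"
  shows "nu2 (of_int p / of_int d)
    = ereal (real_of_int (int (multiplicity 2 p) - int (multiplicity 2 d)))"
proof -
  obtain p' d' where qd: "quotient_of (of_int p / of_int d) = (p', d')"
    by (cases "quotient_of (of_int p / of_int d)")
  have "d' > 0" using quotient_of_denom_pos[OF qd] .
  have eq: "(of_int p / of_int d :: rat) = of_int p' / of_int d'"
    using quotient_of_div[OF qd] .
  have nz: "(of_int p / of_int d :: rat) \<noteq> 0" using assms by simp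
  hence "p' \<noteq> 0" using eq by auto
  have "(of_int (p * d') :: rat) = of_int (p' * d)"
    using eq assms \<open>d' > 0\<close> by (simp add: field_simps)
  hence "multiplicity 2 (p * d') = multiplicity 2 (p' * d)"
    by (simp only: of_int_eq_iff)
  hence "multiplicity (2::int) p + multiplicity 2 d' = multiplicity 2 p' + multiplicity 2 d"
    using assms \<open>p' \<noteq> 0\<close> \<open>d' > 0\<close>
    by (simp add: prime_elem_multiplicity_mult_distrib)
  thus ?thesis unfolding nu2_def using nz qd by simp
qed

lemma nu2_double: "nu2 (2 * q) = nu2 q + 1"
proof (cases "q = 0")
  case False
  obtain p d where qd: "quotient_of q = (p, d)" by (cases "quotient_of q")
  have "d > 0" using quotient_of_denom_pos[OF qd] .
  have q: "q = of_int p / of_int d" using quotient_of_div[OF qd] .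
  with False have "p \<noteq> 0" by auto
  have "2 * q = of_int (2 * p) / of_int d" by (simp add: q)
  thus ?thesis using nu2_of_int_div[of p d] nu2_of_int_div[of "2 * p" d]
    \<open>p \<noteq> 0\<close> \<open>d > 0\<close> q by (simp add: multiplicity_times_same)
qed (simp add: nu2_def)

lemma nu2_int_plus_frac_pow2:
  fixes z B :: int
  assumes "B \<noteq> 0" "multiplicity 2 B < n"
  shows "nu2 (of_int z + of_int B / 2 ^ n)
    = ereal (real_of_int (int (multiplicity 2 B) - int n))"
proof -
  have "multiplicity 2 (B + z * 2 ^ n) = multiplicity 2 B"
  proof (cases "z = 0")
    case False
    have "n \<le> multiplicity 2 (z * 2 ^ n)"
      using False by (intro multiplicity_geI) auto
    thus ?thesis using assms False by (intro multiplicity_sum_lt) auto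
  qed simp
  moreover have "B + z * 2 ^ n \<noteq> 0"
  proof
    assume "B + z * 2 ^ n = 0"
    hence "2 ^ n dvd B" by (metis add_eq_0_iff dvd_minus_iff dvd_triv_right)
    with assms show False by (simp add: power_dvd_iff_le_multiplicity)
  qed
  moreover have "(of_int z + of_int B / 2 ^ n :: rat) = of_int (B + z * 2 ^ n) / of_int (2 ^ n)"
    by (simp add: field_simps)
  ultimately show ?thesis using nu2_of_int_div[of "B + z * 2 ^ n" "2 ^ n"] by simp
qed

lemma Zhalf_int_plus_frac_pow2: "of_int z + of_int B / 2 ^ n \<in> Zhalf"
proof -
  have "(of_int z + of_int B / 2 ^ n :: rat) = of_int (z * 2 ^ n + B) / 2 ^ n"
    by (simp add: field_simps)
  thus ?thesis unfolding Zhalf_def by blast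
qed

lemma Zhalf_double:
  assumes "q \<in> Zhalf"
  shows "2 * q \<in> Zhalf"
proof -
  from assms obtain m k where "q = of_int m / 2 ^ k" unfolding Zhalf_def by blast
  hence "2 * q = of_int (2 * m) / 2 ^ k" by simp
  thus ?thesis unfolding Zhalf_def by blast
qed

lemma binomial_less_two_power:
  assumes "0 < k" "k \<le> n"
  shows "n choose k < 2 ^ n"
proof -
  have "(\<Sum>i\<in>{0,k}. n choose i) \<le> (\<Sum>i\<le>n. n choose i)"
    by (rule sum_mono2) (use assms in auto)
  thus ?thesis using assms choose_row_sum[of n] by simp
qed

lemma multiplicity_less_if_less_power:
  fixes x p :: int
  assumes "0 < x" "x < p ^ n"
  shows "multiplicity p x < n"
proof -
  have "p ^ n \<le> \<bar>p\<bar> ^ n" by (metis abs_ge_self power_abs)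
  show ?thesis
  proof (cases "is_unit p")
    case True
    with \<open>p ^ n \<le> \<bar>p\<bar> ^ n\<close> assms have "n \<noteq> 0" by auto
    with True show ?thesis by (simp add: multiplicity_unit_left)
  next
    case False
    from \<open>p ^ n \<le> \<bar>p\<bar> ^ n\<close> assms have "\<not> p ^ n dvd x" by (auto dest: zdvd_imp_le)
    with assms False show ?thesis by (intro multiplicity_lessI) auto
  qed
qed

lemma multiplicity_two_binomial_less:
  assumes "0 < k" "k \<le> n"
  shows "multiplicity (2::int) (int (n choose k)) < n"
proof (rule multiplicity_less_if_less_power)
  show "0 < int (n choose k)" using assms by simp
  show "int (n choose k) < 2 ^ n"
    using binomial_less_two_power[OF assms] by (simp flip: of_nat_less_iff)
qed

lemma multiplicity_two_le_binomial_odd: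
  assumes "odd k" "k \<le> n"
  shows "multiplicity (2::int) (int n) \<le> multiplicity 2 (int (n choose k))"
proof -
  define m where "m = multiplicity (2::int) (int n)"
  have "int k * int (n choose k) = int n * int ((n - 1) choose (k - 1))"
    using times_binomial_minus1_eq[of k n] \<open>odd k\<close> by (metis of_nat_mult odd_pos)
  moreover have "(2::int) ^ m dvd int n" unfolding m_def by (rule multiplicity_dvd)
  ultimately have "(2::int) ^ m dvd int k * int (n choose k)" by simp
  moreover have "coprime ((2::int) ^ m) (int k)" using \<open>odd k\<close> by simp
  ultimately have "(2::int) ^ m dvd int (n choose k)"
    using coprime_dvd_mult_right_iff by blast
  thus ?thesis unfolding m_def using \<open>k \<le> n\<close> by (intro multiplicity_geI) auto
qed

lemma cr_eq_double_int_plus_frac: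
  "cr r a b = 2 * (of_int ((-1) ^ r * (int (2*r choose (2*b+2)) - int (2*r choose (2*a+1))))
    + of_int ((-1) ^ r * int (2*r choose (2*a+1))) / 2 ^ (2*r))"
  unfolding cr_def by (simp add: field_simps)

lemma nu2_cr:
  assumes "a < r"
  shows "nu2 (cr r a b)
    = ereal (real_of_int (int (multiplicity (2::int) (int (2*r choose (2*a+1)))) + 1 - 2 * int r))"
proof -
  define B where "B = int (2*r choose (2*a+1))"
  have "0 < B" using assms by (simp add: B_def)
  have "multiplicity 2 B < 2*r"
    using assms unfolding B_def by (intro multiplicity_two_binomial_less) auto
  moreover have "multiplicity 2 ((-1) ^ r * B) = multiplicity 2 B"
    by (simp add: multiplicity_times_unit_right)
  ultimately have "nu2 (of_int ((-1) ^ r * (int (2*r choose (2*b+2)) - B))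
      + of_int ((-1) ^ r * B) / 2 ^ (2*r)) = ereal (real_of_int (int (multiplicity 2 B) - 2 * int r))"
    using \<open>0 < B\<close> by (subst nu2_int_plus_frac_pow2) auto
  thus ?thesis unfolding cr_eq_double_int_plus_frac nu2_double B_def[symmetric] by simp
qed

lemma cab_minus_cab_swap:
  "cab a b - cab b a = of_int (2 * ((-1) ^ (a+b+1)
    * (int (2*(a+b+1) choose (2*b+2)) - int (2*(a+b+1) choose (2*a+2)))))"
proof -
  have "2*(a+b+1) choose (2*b+1) = 2*(a+b+1) choose (2*a+1)"
    using binomial_symmetric[of "2*b+1" "2*(a+b+1)"] by (simp add: algebra_simps)
  thus ?thesis unfolding cab_def cr_def by (simp add: algebra_simps)
qed

theorem mainTheorem9:
  fixes a b :: nat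
  shows "cab a b \<in> Zhalf
    \<and> (\<exists>m::int. cab a b - cab b a = of_int (2 * m))
    \<and> nu2 (cab (a + b) 0) = nu2 (cab 0 (a + b))
    \<and> nu2 (cab 0 (a + b)) \<le> nu2 (cab a b)
    \<and> nu2 (cab a b) \<le> 0"
proof -
  define n where "n = 2*(a+b+1)"
  define v where "v k = ereal (real_of_int (int (multiplicity (2::int) (int k)) + 1 - int n))" for k
  have "cab a b \<in> Zhalf"
    unfolding cab_def cr_eq_double_int_plus_frac by (intro Zhalf_double Zhalf_int_plus_frac_pow2)
  moreover have "\<exists>m::int. cab a b - cab b a = of_int (2 * m)"
    using cab_minus_cab_swap by blast
  moreover have "nu2 (cab a b) = v (n choose (2*a+1))"
    and "nu2 (cab (a+b) 0) = v (n choose (2*(a+b)+1))"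
    and "nu2 (cab 0 (a+b)) = v (n choose 1)"
    unfolding cab_def v_def n_def by (simp_all add: nu2_cr)
  moreover have "n choose (2*(a+b)+1) = n"
    using binomial_symmetric[of "2*(a+b)+1" n] by (simp add: n_def)
  moreover have "multiplicity (2::int) (int n) \<le> multiplicity 2 (int (n choose (2*a+1)))"
    by (rule multiplicity_two_le_binomial_odd) (simp_all add: n_def)
  moreover have "multiplicity (2::int) (int (n choose (2*a+1))) < n"
    by (rule multiplicity_two_binomial_less) (simp_all add: n_def)
  ultimately show ?thesis by (simp add: v_def)
qed

end
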